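(* For every $z_j\in Z_\theta$ and every $t=0,1,\dots,T-2$, $$\bar\psi_t(\theta,z_j)\le\gamma_t\theta+\theta\sum_{n=1}^{T-1-t}\alpha^n\gamma_{t+n}\prod_{m=0}^{n-1}F_{t+m}\big(z_j+(m+1)\theta-s_{t+m+1}\big).$$
   Context: Model. Fix an integer horizon $T\ge 2$, a discount factor $\alpha\in(0,1]$, and for $t=0,\dots,T-1$: unit ordering costs $c_t\in\mathbb R$, a salvage coefficient $c_T\in\mathbb R$, setup costs $K_t\ge 0$, functions $G_t:\mathbb R\to\mathbb R$, and independent nonnegative random demands $D_0,\dots,D_{T-1}$ with right-continuous distribution functions $F_t$ and finite means; all expectations appearing are assumed finite. Put $C_t(y)=(c_t-\alpha c_{t+1})y+G_t(y)+\alpha c_{t+1}E[D_t]$. Standing assumptions: (i) each $C_t$ is convex with $C_t(y)\to+\infty$ as $|y|\to\infty$; (ii) $K_t\ge \alpha K_{t+1}$ for $t=0,\dots,T-2$; (iii) there are constants $\gamma_t\ge 0$ with $|C_t(x)-C_t(y)|\le\gamma_t|x-y|$ for all $x,y$. Grid construction. Fix $\theta>0$, $z_m=m\theta$, $Z_\theta=\{z_m:m\in\mathbb Z\}$, $f_t(n)=F_t(z_{n+1})-F_t(z_n)$ ($n\ge -1$). $C^m_t=\min\{y: C_t(y)=\min_x C_t(x)\}$; with $z_{n_0}<C^m_t\le z_{n_0+1}$, $S^U_t=\min\{z_m\in Z_\theta: z_m\ge C^m_t,\ C_t(z_m)>C_t(z_{n_0})+K_t\}$. $s_{T-1}$ is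 a point with $s_{T-1}\le C^m_{T-1}$, $C_{T-1}(s_{T-1})=C_{T-1}(C^m_{T-1})+K_{T-1}$; $\bar I_{T-1}=s_{T-1}$. For $t=T-2,\dots,0$: $I_t=\max\{z_m\in Z_\theta: z_m<\min(\bar I_{t+1}-\theta,C^m_t)\}$, $\bar I_t=\max\{z_m\in Z_\theta: z_m\le I_t,\ C_t(z_m)>C_t(I_t)+K_t\}+\theta$. $H_{T-1}=C_{T-1}$, $S_{T-1}=C^m_{T-1}$; $V_t(y)=H_t(S_t)+K_t$ for $y<s_t$, $V_t(y)=H_t(y)$ for $y\ge s_t$. For $t=T-2,\dots,0$: $H_t(y)=C_t(y)+\alpha\sum_{n=-1}^\infty V_{t+1}(y-z_n)f_t(n)$; $S_t=\max\{z_m\in Z_\theta: I_t\le z_m\le S^U_t,\ H_t(z_m)=\min\{H_t(z_n):z_n\in Z_\theta, I_t\le z_n\le S^U_t\}\}$; $s_t=S_t$ if $K_t=0$, else $s_t=\min\{z_m\in Z_\theta:\bar I_t\le z_m\le S_t,\ H_t(z_m)\le H_t(S_t)+K_t\}$. Upper estimate functions. $\bar\psi_{T-1}(x,y)=\gamma_{T-1}x$; $\bar\varphi_{T-1}(x,y)=0$ if $y<s_{T-1}$ and $=\gamma_{T-1}x$ if $y\ge s_{T-1}$. For $t=0,\dots,T-2$, with $n$ the integer such that $z_{n-1}\le y-s_{t+1}<z_n$: $\bar\psi_t(x,y)=\gamma_tx$ if $y<s_{t+1}-\theta$, else $\bar\psi_t(x,y)=\gamma_tx+\alpha\sum_{m=-1}^{n-1}\bar\varphi_{t+1}(x,y-z_m)f_t(m)$;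 $\bar\varphi_t(x,y)=0$ if $y<s_t$, $=\bar\psi_t(y-s_t+\theta,y)$ if $y\ge s_t$ and $y-x<s_t$, $=\bar\psi_t(x,y)$ if $y\ge s_t$ and $y-x\ge s_t$. *)

theory Defs
  imports "HOL-Probability.Probability"
begin

definition zg :: "real \<Rightarrow> int \<Rightarrow> real" where
  "zg \<theta> m = of_int m * \<theta>"

definition Zg :: "real \<Rightarrow> real set" where
  "Zg \<theta> = range (zg \<theta>)"

text \<open>f_t(n) = F_t(z_{n+1}) - F_t(z_n); F t is the distribution function of D_t.\<close>
definition fd :: "real \<Rightarrow> (nat \<Rightarrow> real \<Rightarrow> real) \<Rightarrow> nat \<Rightarrow> int \<Rightarrow> real" where
  "fd \<theta> F t n = F t (zg \<theta> (n + 1)) - F t (zg \<theta> n)"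

definition Cc :: "real \<Rightarrow> (nat \<Rightarrow> real) \<Rightarrow> (nat \<Rightarrow> real \<Rightarrow> real) \<Rightarrow> (nat \<Rightarrow> real measure)
    \<Rightarrow> nat \<Rightarrow> real \<Rightarrow> real" where
  "Cc \<alpha> c G \<mu> t y = (c t - \<alpha> * c (Suc t)) * y + G t y + \<alpha> * c (Suc t) * (\<integral>x. x \<partial>(\<mu> t))"

definition Cmin :: "(real \<Rightarrow> real) \<Rightarrow> real" where
  "Cmin g = (LEAST y. \<forall>x. g y \<le> g x)"

text \<open>S^U: n0 is the integer with z_{n0} < C^m <= z_{n0+1}, i.e. n0 = ceiling(C^m/theta) - 1.\<close>
definition SUg :: "real \<Rightarrow> (real \<Rightarrow> real) \<Rightarrow> real \<Rightarrow> real" where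
  "SUg \<theta> g k = (LEAST z. z \<in> Zg \<theta> \<and> Cmin g \<le> z \<and>
                       g z > g (zg \<theta> (\<lceil>Cmin g / \<theta>\<rceil> - 1)) + k)"

definition sLast :: "(real \<Rightarrow> real) \<Rightarrow> real \<Rightarrow> real" where
  "sLast g k = (SOME s. s \<le> Cmin g \<and> g s = g (Cmin g) + k)"

definition Ilow :: "real \<Rightarrow> (real \<Rightarrow> real) \<Rightarrow> real \<Rightarrow> real" where
  "Ilow \<theta> g Ibn = (GREATEST z. z \<in> Zg \<theta> \<and> z < min (Ibn - \<theta>) (Cmin g))"

definition Ibar :: "real \<Rightarrow> (real \<Rightarrow> real) \<Rightarrow> real \<Rightarrow> real \<Rightarrow> real" where
  "Ibar \<theta> g k I = (GREATEST z. z \<in> Zg \<theta> \<and> z \<le> I \<and> g z > g I + k) + \<theta>"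

definition Vfun :: "(real \<Rightarrow> real) \<Rightarrow> real \<Rightarrow> real \<Rightarrow> real \<Rightarrow> real \<Rightarrow> real" where
  "Vfun H S s k y = (if y < s then H S + k else H y)"

text \<open>One backward step: from the data at t+1 compute the data at t.
  The series sum_{n=-1}^infty is written with n = int j - 1, j = 0,1,2,...\<close>
definition dp_step :: "real \<Rightarrow> real \<Rightarrow> (nat \<Rightarrow> real) \<Rightarrow> (nat \<Rightarrow> real \<Rightarrow> real) \<Rightarrow> (nat \<Rightarrow> real \<Rightarrow> real)
    \<Rightarrow> nat \<Rightarrow> (real \<Rightarrow> real) \<times> real \<times> real \<times> real \<Rightarrow> (real \<Rightarrow> real) \<times> real \<times> real \<times> real" where
  "dp_step \<alpha> \<theta> K C F t prev =
     (case prev of (Hn, Sn, sn, Ibn) \<Rightarrow>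
       let V = Vfun Hn Sn sn (K (Suc t));
           H = (\<lambda>y. C t y + \<alpha> * (\<Sum>j. V (y - zg \<theta> (int j - 1)) * fd \<theta> F t (int j - 1)));
           I = Ilow \<theta> (C t) Ibn;
           Ib = Ibar \<theta> (C t) (K t) I;
           A = {z \<in> Zg \<theta>. I \<le> z \<and> z \<le> SUg \<theta> (C t) (K t)};
           S = (GREATEST z. z \<in> A \<and> H z = Min (H ` A));
           s = (if K t = 0 then S
                else (LEAST z. z \<in> Zg \<theta> \<and> Ib \<le> z \<and> z \<le> S \<and> H z \<le> H S + K t))
       in (H, S, s, Ib))"

text \<open>dp k holds (H_t, S_t, s_t, barI_t) for t = T-1-k.\<close>
primrec dp :: "nat \<Rightarrow> real \<Rightarrow> real \<Rightarrow> (nat \<Rightarrow> real) \<Rightarrow> (nat \<Rightarrow> real \<Rightarrow> real) \<Rightarrow> (nat \<Rightarrow> real \<Rightarrow> real)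
    \<Rightarrow> nat \<Rightarrow> (real \<Rightarrow> real) \<times> real \<times> real \<times> real" where
  "dp T \<alpha> \<theta> K C F 0 =
     (C (T - 1), Cmin (C (T - 1)), sLast (C (T - 1)) (K (T - 1)), sLast (C (T - 1)) (K (T - 1)))"
| "dp T \<alpha> \<theta> K C F (Suc k) = dp_step \<alpha> \<theta> K C F (T - 2 - k) (dp T \<alpha> \<theta> K C F k)"

definition Hf :: "nat \<Rightarrow> real \<Rightarrow> real \<Rightarrow> (nat \<Rightarrow> real) \<Rightarrow> (nat \<Rightarrow> real \<Rightarrow> real) \<Rightarrow> (nat \<Rightarrow> real \<Rightarrow> real)
    \<Rightarrow> nat \<Rightarrow> real \<Rightarrow> real" where
  "Hf T \<alpha> \<theta> K C F t = fst (dp T \<alpha> \<theta> K C F (T - 1 - t))"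

definition Sf :: "nat \<Rightarrow> real \<Rightarrow> real \<Rightarrow> (nat \<Rightarrow> real) \<Rightarrow> (nat \<Rightarrow> real \<Rightarrow> real) \<Rightarrow> (nat \<Rightarrow> real \<Rightarrow> real)
    \<Rightarrow> nat \<Rightarrow> real" where
  "Sf T \<alpha> \<theta> K C F t = fst (snd (dp T \<alpha> \<theta> K C F (T - 1 - t)))"

definition sf :: "nat \<Rightarrow> real \<Rightarrow> real \<Rightarrow> (nat \<Rightarrow> real) \<Rightarrow> (nat \<Rightarrow> real \<Rightarrow> real) \<Rightarrow> (nat \<Rightarrow> real \<Rightarrow> real)
    \<Rightarrow> nat \<Rightarrow> real" where
  "sf T \<alpha> \<theta> K C F t = fst (snd (snd (dp T \<alpha> \<theta> K C F (T - 1 - t))))"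

definition Vf :: "nat \<Rightarrow> real \<Rightarrow> real \<Rightarrow> (nat \<Rightarrow> real) \<Rightarrow> (nat \<Rightarrow> real \<Rightarrow> real) \<Rightarrow> (nat \<Rightarrow> real \<Rightarrow> real)
    \<Rightarrow> nat \<Rightarrow> real \<Rightarrow> real" where
  "Vf T \<alpha> \<theta> K C F t = Vfun (Hf T \<alpha> \<theta> K C F t) (Sf T \<alpha> \<theta> K C F t) (sf T \<alpha> \<theta> K C F t) (K t)"

text \<open>ub k holds (barpsi_t, barphi_t) for t = T-1-k; s is the sequence s_t.
  The integer n with z_{n-1} <= y - s_{t+1} < z_n satisfies n - 1 = floor((y - s_{t+1})/theta).\<close>
primrec ub :: "nat \<Rightarrow> real \<Rightarrow> real \<Rightarrow> (nat \<Rightarrow> real) \<Rightarrow> (nat \<Rightarrow> real \<Rightarrow> real) \<Rightarrow> (nat \<Rightarrow> real)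
    \<Rightarrow> nat \<Rightarrow> (real \<Rightarrow> real \<Rightarrow> real) \<times> (real \<Rightarrow> real \<Rightarrow> real)" where
  "ub T \<alpha> \<theta> \<gamma> F s 0 =
     ((\<lambda>x y. \<gamma> (T - 1) * x),
      (\<lambda>x y. if y < s (T - 1) then 0 else \<gamma> (T - 1) * x))"
| "ub T \<alpha> \<theta> \<gamma> F s (Suc k) =
     (let t = T - 2 - k;
          \<phi>n = snd (ub T \<alpha> \<theta> \<gamma> F s k);
          \<psi> = (\<lambda>x y. if y < s (Suc t) - \<theta> then \<gamma> t * x
                     else \<gamma> t * x + \<alpha> * (\<Sum>m \<in> {-1 .. \<lfloor>(y - s (Suc t)) / \<theta>\<rfloor>}.
                                              \<phi>n x (y - zg \<theta> m) * fd \<theta> F t m));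
          \<phi> = (\<lambda>x y. if y < s t then 0
                     else if y - x < s t then \<psi> (y - s t + \<theta>) y
                     else \<psi> x y)
      in (\<psi>, \<phi>))"

definition psibar :: "nat \<Rightarrow> real \<Rightarrow> real \<Rightarrow> (nat \<Rightarrow> real) \<Rightarrow> (nat \<Rightarrow> real \<Rightarrow> real) \<Rightarrow> (nat \<Rightarrow> real)
    \<Rightarrow> nat \<Rightarrow> real \<Rightarrow> real \<Rightarrow> real" where
  "psibar T \<alpha> \<theta> \<gamma> F s t = fst (ub T \<alpha> \<theta> \<gamma> F s (T - 1 - t))"

end

theory Submission
  imports Defs
begin

text \<open>
  Write R_t(y) for the right-hand side of the claim. It satisfies the recursion
  R_t(y) = \<gamma>_t \<theta> + \<alpha> F_t(y + \<theta> - s_{t+1}) R_{t+1}(y + \<theta>) and is nondecreasing in y.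
  In \<psi>_t(\<theta>, y) the function \<phi>_{t+1}(\<theta>, \<cdot>) is only evaluated at grid points
  y - z_m \<in> [s_{t+1}, y + \<theta>], and the weights f_t(m) telescope to at most
  F_t(y + \<theta> - s_{t+1}); so \<psi>_t(\<theta>, y) \<le> R_t(y) follows from \<phi>_{t+1}(\<theta>, \<cdot>) \<le> R_{t+1}
  on grid points above s_{t+1}. Since the s_t with t \<le> T - 2 are grid points, \<phi>_t(\<theta>, y)
  coincides with \<psi>_t(\<theta>, y) on grid points y \<ge> s_t, and backward induction on t closes.
\<close>

lemma Zg_iff: "x \<in> Zg \<theta> \<longleftrightarrow> (\<exists>m. x = of_int m * \<theta>)"
  by (auto simp: Zg_def zg_def)

lemma zg_in_Zg [simp]: "zg \<theta> m \<in> Zg \<theta>"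
  by (simp add: Zg_def)

lemma Zg_diff: "x \<in> Zg \<theta> \<Longrightarrow> y \<in> Zg \<theta> \<Longrightarrow> x - y \<in> Zg \<theta>"
  by (auto simp: Zg_iff left_diff_distrib[symmetric] intro: exI[of _ "_ - _"])

lemma Zg_less_imp_le_diff:
  assumes "\<theta> > 0" "x \<in> Zg \<theta>" "y \<in> Zg \<theta>" "x < y"
  shows "x \<le> y - \<theta>"
proof -
  obtain a b where ab: "x = of_int a * \<theta>" "y = of_int b * \<theta>"
    using assms by (auto simp: Zg_iff)
  with assms have "of_int a \<le> (of_int b - 1 :: real)"
    by (simp add: mult_less_cancel_right)
  with \<open>\<theta> > 0\<close> have "of_int a * \<theta> \<le> (of_int b - 1) * \<theta>"
    by (intro mult_right_mono) auto
  with ab show ?thesis by (simp add: algebra_simps)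
qed

lemma finite_Zg_Int_atLeastAtMost:
  assumes "\<theta> > 0"
  shows "finite (Zg \<theta> \<inter> {a..b})"
proof (rule finite_subset)
  show "Zg \<theta> \<inter> {a..b} \<subseteq> zg \<theta> ` {\<lceil>a/\<theta>\<rceil>..\<lfloor>b/\<theta>\<rfloor>}"
  proof
    fix x assume "x \<in> Zg \<theta> \<inter> {a..b}"
    then obtain m where x: "x = zg \<theta> m" "a \<le> x" "x \<le> b"
      by (auto simp: Zg_def)
    with assms have "\<lceil>a/\<theta>\<rceil> \<le> m" "m \<le> \<lfloor>b/\<theta>\<rfloor>"
      by (simp_all add: zg_def ceiling_le_iff le_floor_iff divide_le_eq le_divide_eq)
    with x show "x \<in> zg \<theta> ` {\<lceil>a/\<theta>\<rceil>..\<lfloor>b/\<theta>\<rfloor>}" by auto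
  qed
qed simp

lemma Zg_exists_le:
  assumes "\<theta> > 0"
  shows "\<exists>z\<in>Zg \<theta>. z \<le> b"
proof
  have "of_int \<lfloor>b/\<theta>\<rfloor> * \<theta> \<le> b/\<theta> * \<theta>"
    using assms by (intro mult_right_mono) auto
  with assms show "zg \<theta> \<lfloor>b/\<theta>\<rfloor> \<le> b" by (simp add: zg_def)
qed simp

lemma Zg_exists_ge:
  assumes "\<theta> > 0"
  shows "\<exists>z\<in>Zg \<theta>. b \<le> z"
proof
  have "b/\<theta> * \<theta> \<le> of_int \<lceil>b/\<theta>\<rceil> * \<theta>"
    using assms by (intro mult_right_mono) auto
  with assms show "b \<le> zg \<theta> \<lceil>b/\<theta>\<rceil>" by (simp add: zg_def)
qed simp

lemma Zg_exists_less:
  assumes "\<theta> > 0"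
  shows "\<exists>z\<in>Zg \<theta>. z < b"
  using Zg_exists_le[OF assms, of "b - \<theta>"] assms by force

lemma GreatestI_finite:
  fixes P :: "'a::linorder \<Rightarrow> bool"
  assumes "P w" and "finite {x. P x \<and> w \<le> x}"
  shows "P (GREATEST x. P x)"
proof -
  let ?M = "Max {x. P x \<and> w \<le> x}"
  have M: "P ?M \<and> w \<le> ?M"
    using Max_in[OF assms(2)] assms(1) by blast
  have "y \<le> ?M" if "P y" for y
    using Max_ge[OF assms(2), of y] M that by (cases "w \<le> y") auto
  with M have "(GREATEST x. P x) = ?M"
    by (intro Greatest_equality) auto
  with M show ?thesis by simp
qed

lemma LeastI_finite:
  fixes P :: "'a::linorder \<Rightarrow> bool"
  assumes "P w" and "finite {x. P x \<and> x \<le> w}"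
  shows "P (LEAST x. P x)"
proof -
  let ?M = "Min {x. P x \<and> x \<le> w}"
  have M: "P ?M \<and> ?M \<le> w"
    using Min_in[OF assms(2)] assms(1) by blast
  have "?M \<le> y" if "P y" for y
    using Min_le[OF assms(2), of y] M that by (cases "y \<le> w") auto
  with M have "(LEAST x. P x) = ?M"
    by (intro Least_equality) auto
  with M show ?thesis by simp
qed

lemma Zg_GreatestI:
  assumes "\<theta> > 0" "\<And>x. P x \<Longrightarrow> x \<in> Zg \<theta> \<and> x \<le> B" "P w"
  shows "P (GREATEST x. P x)"
proof (rule GreatestI_finite)
  show "finite {x. P x \<and> w \<le> x}"
    by (rule finite_subset[OF _ finite_Zg_Int_atLeastAtMost[OF assms(1), of w B]])
      (use assms(2) in auto)
qed fact

lemma Zg_LeastI: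
  assumes "\<theta> > 0" "\<And>x. P x \<Longrightarrow> x \<in> Zg \<theta> \<and> B \<le> x" "P w"
  shows "P (LEAST x. P x)"
proof (rule LeastI_finite)
  show "finite {x. P x \<and> x \<le> w}"
    by (rule finite_subset[OF _ finite_Zg_Int_atLeastAtMost[OF assms(1), of B w]])
      (use assms(2) in auto)
qed fact

lemma Greatest_argmin_in:
  fixes H :: "'a::linorder \<Rightarrow> 'b::linorder"
  assumes "finite A" "A \<noteq> {}"
  shows "(GREATEST z. z \<in> A \<and> H z = Min (H ` A)) \<in> A"
proof -
  let ?P = "\<lambda>z. z \<in> A \<and> H z = Min (H ` A)"
  have "Min (H ` A) \<in> H ` A"
    using assms by (intro Min_in) auto
  then obtain u where "?P u"
    by auto
  moreover have "finite {x. ?P x \<and> u \<le> x}"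
    using assms(1) by (rule finite_subset[rotated]) blast
  ultimately have "?P (GREATEST z. ?P z)"
    by (rule GreatestI_finite)
  then show ?thesis
    by (rule conjunct1)
qed

lemma Ilow_in_Zg_less:
  assumes "\<theta> > 0"
  shows "Ilow \<theta> g b \<in> Zg \<theta> \<and> Ilow \<theta> g b < min (b - \<theta>) (Cmin g)"
proof -
  let ?P = "\<lambda>z. z \<in> Zg \<theta> \<and> z < min (b - \<theta>) (Cmin g)"
  obtain w where "?P w"
    using Zg_exists_less[OF assms] by blast
  then have "?P (GREATEST z. ?P z)"
    by (rule Zg_GreatestI[OF assms, where B = "min (b - \<theta>) (Cmin g)", rotated]) auto
  then show ?thesis
    unfolding Ilow_def .
qed

lemma SUg_in_Zg_ge_Cmin:
  assumes "\<theta> > 0" and "filterlim g at_top at_top"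
  shows "SUg \<theta> g k \<in> Zg \<theta> \<and> Cmin g \<le> SUg \<theta> g k"
proof -
  let ?P = "\<lambda>z. z \<in> Zg \<theta> \<and> Cmin g \<le> z \<and> g (zg \<theta> (\<lceil>Cmin g / \<theta>\<rceil> - 1)) + k < g z"
  obtain b where b: "\<forall>x\<ge>b. g (zg \<theta> (\<lceil>Cmin g / \<theta>\<rceil> - 1)) + k < g x"
    using assms(2) unfolding filterlim_at_top_dense eventually_at_top_linorder by blast
  obtain w where "w \<in> Zg \<theta>" "max b (Cmin g) \<le> w"
    using Zg_exists_ge[OF assms(1)] by blast
  with b have "?P w"
    by auto
  then have "?P (LEAST z. ?P z)"
    by (rule Zg_LeastI[OF assms(1), where B = "Cmin g", rotated]) auto
  then show ?thesis
    unfolding SUg_def by blast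
qed

lemma Ibar_le:
  assumes "\<theta> > 0" "0 \<le> k" "I \<in> Zg \<theta>" and "filterlim g at_top at_bot"
  shows "Ibar \<theta> g k I \<le> I"
proof -
  let ?P = "\<lambda>z. z \<in> Zg \<theta> \<and> z \<le> I \<and> g I + k < g z"
  obtain b where b: "\<forall>x\<le>b. g I + k < g x"
    using assms(4) unfolding filterlim_at_top_dense eventually_at_bot_linorder by blast
  obtain w where "w \<in> Zg \<theta>" "w \<le> min b I"
    using Zg_exists_le[OF assms(1)] by blast
  with b have "?P w"
    by auto
  then have P: "?P (GREATEST z. ?P z)"
    by (rule Zg_GreatestI[OF assms(1), where B = I, rotated]) auto
  with assms(2) have "(GREATEST z. ?P z) < I"
    by (cases "(GREATEST z. ?P z) = I") auto
  with P assms(1,3) have "(GREATEST z. ?P z) \<le> I - \<theta>"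
    by (blast intro: Zg_less_imp_le_diff)
  then show ?thesis
    unfolding Ibar_def by simp
qed

lemma dp_step_s_in_Zg:
  assumes "\<theta> > 0" "0 \<le> K t"
    and "filterlim (C t) at_top at_top" "filterlim (C t) at_top at_bot"
  shows "fst (snd (snd (dp_step \<alpha> \<theta> K C F t (Hn, Sn, sn, Ibn)))) \<in> Zg \<theta>"
proof -
  define H where "H y = C t y + \<alpha> * (\<Sum>j. Vfun Hn Sn sn (K (Suc t)) (y - zg \<theta> (int j - 1))
      * fd \<theta> F t (int j - 1))" for y
  define I where "I = Ilow \<theta> (C t) Ibn"
  define Ib where "Ib = Ibar \<theta> (C t) (K t) I"
  define A where "A = {z \<in> Zg \<theta>. I \<le> z \<and> z \<le> SUg \<theta> (C t) (K t)}"
  define S where "S = (GREATEST z. z \<in> A \<and> H z = Min (H ` A))"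
  have I: "I \<in> A"
    using Ilow_in_Zg_less[OF assms(1), of "C t" Ibn] SUg_in_Zg_ge_Cmin[OF assms(1,3), of "K t"]
    by (simp add: A_def I_def)
  have "finite A"
    by (rule finite_subset[OF _ finite_Zg_Int_atLeastAtMost[OF assms(1)]]) (auto simp: A_def)
  with I have "S \<in> A"
    unfolding S_def by (blast intro: Greatest_argmin_in)
  then have S: "S \<in> Zg \<theta>" "I \<le> S"
    by (simp_all add: A_def)
  have "Ib \<le> I"
    using Ibar_le[OF assms(1,2) _ assms(4)] I unfolding Ib_def A_def by blast
  with S have "Ib \<le> S"
    by linarith
  let ?P = "\<lambda>z. z \<in> Zg \<theta> \<and> Ib \<le> z \<and> z \<le> S \<and> H z \<le> H S + K t"
  have "?P (LEAST z. ?P z)"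
    by (rule Zg_LeastI[OF assms(1), where B = Ib and w = S]) (use S \<open>Ib \<le> S\<close> assms(2) in auto)
  then have least: "(LEAST z. ?P z) \<in> Zg \<theta>"
    by (rule conjunct1)
  have eq: "fst (snd (snd (dp_step \<alpha> \<theta> K C F t (Hn, Sn, sn, Ibn)))) =
      (if K t = 0 then S else LEAST z. z \<in> Zg \<theta> \<and> Ib \<le> z \<and> z \<le> S \<and> H z \<le> H S + K t)"
    unfolding dp_step_def Let_def prod.case fst_conv snd_conv S_def A_def Ib_def I_def H_def
    by (rule refl)
  show ?thesis
    unfolding eq using S(1) least by simp
qed

text \<open>The last point s_{T-1} comes from sLast and need not lie on the grid.\<close>

lemma sf_in_Zg:
  assumes "\<theta> > 0" "t + 2 \<le> T" "0 \<le> K t"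
    and "filterlim (C t) at_top at_top" "filterlim (C t) at_top at_bot"
  shows "sf T \<alpha> \<theta> K C F t \<in> Zg \<theta>"
proof -
  obtain Hn Sn sn Ibn where prev: "dp T \<alpha> \<theta> K C F (T - 2 - t) = (Hn, Sn, sn, Ibn)"
    by (metis prod.collapse)
  have k: "T - 1 - t = Suc (T - 2 - t)" "T - 2 - (T - 2 - t) = t"
    using assms(2) by auto
  have "sf T \<alpha> \<theta> K C F t = fst (snd (snd (dp_step \<alpha> \<theta> K C F t (Hn, Sn, sn, Ibn))))"
    unfolding sf_def k(1) dp.simps(2) k(2) prev ..
  with dp_step_s_in_Zg[where K = K and C = C and t = t, OF assms(1,3-5)] show ?thesis
    by simp
qed

definition phibar :: "nat \<Rightarrow> real \<Rightarrow> real \<Rightarrow> (nat \<Rightarrow> real) \<Rightarrow> (nat \<Rightarrow> real \<Rightarrow> real) \<Rightarrow> (nat \<Rightarrow> real)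
    \<Rightarrow> nat \<Rightarrow> real \<Rightarrow> real \<Rightarrow> real" where
  "phibar T \<alpha> \<theta> \<gamma> F s t = snd (ub T \<alpha> \<theta> \<gamma> F s (T - 1 - t))"

lemma phibar_last: "phibar T \<alpha> \<theta> \<gamma> F s (T - 1) x y = (if y < s (T - 1) then 0 else \<gamma> (T - 1) * x)"
  by (simp add: phibar_def)

lemma psibar_eq:
  assumes "t + 2 \<le> T"
  shows "psibar T \<alpha> \<theta> \<gamma> F s t x y =
    (if y < s (Suc t) - \<theta> then \<gamma> t * x
     else \<gamma> t * x + \<alpha> * (\<Sum>m \<in> {-1 .. \<lfloor>(y - s (Suc t)) / \<theta>\<rfloor>}.
                             phibar T \<alpha> \<theta> \<gamma> F s (Suc t) x (y - zg \<theta> m) * fd \<theta> F t m))"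
proof -
  have "T - 1 - t = Suc (T - 2 - t)" "T - 2 - (T - 2 - t) = t" "T - 1 - Suc t = T - 2 - t"
    using assms by auto
  then show ?thesis by (simp add: psibar_def phibar_def Let_def)
qed

lemma phibar_eq:
  assumes "t + 2 \<le> T"
  shows "phibar T \<alpha> \<theta> \<gamma> F s t x y =
    (if y < s t then 0
     else if y - x < s t then psibar T \<alpha> \<theta> \<gamma> F s t (y - s t + \<theta>) y
     else psibar T \<alpha> \<theta> \<gamma> F s t x y)"
proof -
  have "T - 1 - t = Suc (T - 2 - t)" "T - 2 - (T - 2 - t) = t"
    using assms by auto
  then show ?thesis by (simp add: psibar_def phibar_def Let_def)
qed

definition psibar_majorant :: "nat \<Rightarrow> real \<Rightarrow> real \<Rightarrow> (nat \<Rightarrow> real) \<Rightarrow> (nat \<Rightarrow> real \<Rightarrow> real)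
    \<Rightarrow> (nat \<Rightarrow> real) \<Rightarrow> nat \<Rightarrow> real \<Rightarrow> real" where
  "psibar_majorant T \<alpha> \<theta> \<gamma> F s t y = \<gamma> t * \<theta> + \<theta> * (\<Sum>n = 1..T - 1 - t. \<alpha> ^ n * \<gamma> (t + n) *
     (\<Prod>m = 0..n - 1. F (t + m) (y + real (m + 1) * \<theta> - s (t + m + 1))))"

lemma psibar_majorant_last: "psibar_majorant T \<alpha> \<theta> \<gamma> F s (T - 1) y = \<gamma> (T - 1) * \<theta>"
  by (simp add: psibar_majorant_def)

lemma psibar_majorant_Suc:
  assumes "t + 2 \<le> T"
  shows "psibar_majorant T \<alpha> \<theta> \<gamma> F s t y = \<gamma> t * \<theta>
    + \<alpha> * F t (y + \<theta> - s (Suc t)) * psibar_majorant T \<alpha> \<theta> \<gamma> F s (Suc t) (y + \<theta>)"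
proof -
  define L where "L = T - 2 - t"
  have L: "T - 1 - t = Suc L" "T - 1 - Suc t = L"
    using assms by (auto simp: L_def)
  define h where "h n = \<alpha> ^ n * \<gamma> (t + n) *
      (\<Prod>m = 0..n - 1. F (t + m) (y + real (m + 1) * \<theta> - s (t + m + 1)))" for n
  define h' where "h' n = \<alpha> ^ n * \<gamma> (Suc t + n) *
      (\<Prod>m = 0..n - 1. F (Suc t + m) (y + \<theta> + real (m + 1) * \<theta> - s (Suc t + m + 1)))" for n
  define c where "c = F t (y + \<theta> - s (Suc t))"
  \<comment> \<open>Peeling off the factor with index m = 0 shifts every product to time t + 1 and point y + \<theta>.\<close>
  have peel: "h (Suc n) = \<alpha> * c * (if n = 0 then \<gamma> (Suc t) else h' n)" for n
  proof -
    have "(\<Prod>m = 0..n. F (t + m) (y + real (m + 1) * \<theta> - s (t + m + 1)))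
        = c * (\<Prod>m = 0..n - 1. F (Suc t + m) (y + \<theta> + real (m + 1) * \<theta> - s (Suc t + m + 1)))"
      if "n > 0"
      using that by (cases n) (simp_all add: prod.atLeast0_atMost_Suc_shift c_def algebra_simps
          del: prod.cl_ivl_Suc)
    then show ?thesis by (cases "n = 0") (simp_all add: h_def h'_def c_def)
  qed
  have "(\<Sum>n = 1..Suc L. h n) = (\<Sum>n<Suc L. h (Suc n))"
    by (simp add: sum.atLeast1_atMost_eq)
  also have "\<dots> = \<alpha> * c * (\<gamma> (Suc t) + (\<Sum>n = 1..L. h' n))"
    by (simp add: peel sum.lessThan_Suc_shift sum.atLeast1_atMost_eq sum_distrib_left distrib_left
        del: sum.lessThan_Suc)
  finally show ?thesis
    unfolding psibar_majorant_def L h_def[symmetric] h'_def[symmetric] c_def[symmetric]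
    by (simp add: algebra_simps)
qed

lemma sum_int_telescope:
  fixes h :: "int \<Rightarrow> 'a::ab_group_add"
  assumes "a \<le> b + 1"
  shows "(\<Sum>m\<in>{a..b}. h (m + 1) - h m) = h (b + 1) - h a"
proof -
  have "a - 1 \<le> b" using assms by simp
  then show ?thesis
  proof (induction b rule: int_ge_induct)
    case (step i)
    then have "{a..i + 1} = insert (i + 1) {a..i}" by auto
    with step show ?case by simp
  qed simp
qed

lemma phibar_eq_psibar_on_grid:
  assumes "\<theta> > 0" "t + 2 \<le> T" "s t \<in> Zg \<theta>" "y \<in> Zg \<theta>" "s t \<le> y"
  shows "phibar T \<alpha> \<theta> \<gamma> F s t \<theta> y = psibar T \<alpha> \<theta> \<gamma> F s t \<theta> y"
proof (cases "y - \<theta> < s t")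
  case True
  \<comment> \<open>Two grid points less than \<theta> apart coincide.\<close>
  with assms have "y = s t"
    using Zg_less_imp_le_diff[OF assms(1,3,4)] by fastforce
  with assms(2) show ?thesis
    by (simp add: phibar_eq)
next
  case False
  with assms(2,5) show ?thesis
    by (simp add: phibar_eq)
qed

context
  fixes T :: nat and \<alpha> \<theta> :: real and \<gamma> s :: "nat \<Rightarrow> real" and F :: "nat \<Rightarrow> real \<Rightarrow> real"
  assumes theta_pos: "\<theta> > 0" and alpha_nonneg: "0 \<le> \<alpha>"
    and gamma_nonneg: "\<And>t. t < T \<Longrightarrow> 0 \<le> \<gamma> t"
    and F_nonneg: "\<And>t x. t < T \<Longrightarrow> 0 \<le> F t x"
    and F_mono: "\<And>t. t < T \<Longrightarrow> mono (F t)"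
begin

lemma psibar_majorant_mono:
  assumes "t < T" "y \<le> y'"
  shows "psibar_majorant T \<alpha> \<theta> \<gamma> F s t y \<le> psibar_majorant T \<alpha> \<theta> \<gamma> F s t y'"
proof -
  have "\<alpha> ^ n * \<gamma> (t + n) * (\<Prod>m = 0..n - 1. F (t + m) (y + real (m + 1) * \<theta> - s (t + m + 1)))
      \<le> \<alpha> ^ n * \<gamma> (t + n) * (\<Prod>m = 0..n - 1. F (t + m) (y' + real (m + 1) * \<theta> - s (t + m + 1)))"
    if "n \<in> {1..T - 1 - t}" for n
    using that assms alpha_nonneg
    by (intro mult_left_mono prod_mono conjI F_nonneg monoD[OF F_mono]
        mult_nonneg_nonneg zero_le_power gamma_nonneg) auto
  then have "(\<Sum>n = 1..T - 1 - t. \<alpha> ^ n * \<gamma> (t + n) *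
        (\<Prod>m = 0..n - 1. F (t + m) (y + real (m + 1) * \<theta> - s (t + m + 1))))
      \<le> (\<Sum>n = 1..T - 1 - t. \<alpha> ^ n * \<gamma> (t + n) *
        (\<Prod>m = 0..n - 1. F (t + m) (y' + real (m + 1) * \<theta> - s (t + m + 1))))"
    by (rule sum_mono)
  then show ?thesis
    unfolding psibar_majorant_def using theta_pos by simp
qed

lemma psibar_majorant_nonneg:
  assumes "t < T"
  shows "0 \<le> psibar_majorant T \<alpha> \<theta> \<gamma> F s t y"
  unfolding psibar_majorant_def using assms theta_pos alpha_nonneg
  by (intro add_nonneg_nonneg mult_nonneg_nonneg sum_nonneg prod_nonneg zero_le_power
      gamma_nonneg F_nonneg) auto

lemma sum_phibar_fd_le:
  assumes "t + 2 \<le> T" "y \<in> Zg \<theta>" "s (Suc t) - \<theta> \<le> y"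
    and phibar_le: "\<And>y. y \<in> Zg \<theta> \<Longrightarrow> s (Suc t) \<le> y \<Longrightarrow>
      phibar T \<alpha> \<theta> \<gamma> F s (Suc t) \<theta> y \<le> psibar_majorant T \<alpha> \<theta> \<gamma> F s (Suc t) y"
  shows "(\<Sum>m \<in> {-1 .. \<lfloor>(y - s (Suc t)) / \<theta>\<rfloor>}. phibar T \<alpha> \<theta> \<gamma> F s (Suc t) \<theta> (y - zg \<theta> m) * fd \<theta> F t m)
    \<le> F t (y + \<theta> - s (Suc t)) * psibar_majorant T \<alpha> \<theta> \<gamma> F s (Suc t) (y + \<theta>)"
proof -
  define N where "N = \<lfloor>(y - s (Suc t)) / \<theta>\<rfloor>"
  define R where "R = psibar_majorant T \<alpha> \<theta> \<gamma> F s (Suc t) (y + \<theta>)"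
  have tT: "t < T" "Suc t < T"
    using assms(1) by auto
  have "-1 \<le> (y - s (Suc t)) / \<theta>"
    using assms(3) theta_pos by (simp add: le_divide_eq)
  then have N_ge: "-1 \<le> N"
    by (simp add: N_def le_floor_iff)
  have "of_int N \<le> (y - s (Suc t)) / \<theta>"
    by (simp add: N_def)
  then have "of_int N * \<theta> \<le> y - s (Suc t)"
    using theta_pos by (simp add: le_divide_eq)
  then have N_le: "zg \<theta> (N + 1) \<le> y + \<theta> - s (Suc t)"
    by (simp add: zg_def algebra_simps)
  have fd_nonneg: "0 \<le> fd \<theta> F t m" for m
    using monoD[OF F_mono[OF tT(1)], of "zg \<theta> m" "zg \<theta> (m + 1)"] theta_pos
    by (simp add: fd_def zg_def distrib_right)
  \<comment> \<open>Every summand is evaluated at a grid point in the interval [s (t + 1), y + \<theta>].\<close>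
  have "phibar T \<alpha> \<theta> \<gamma> F s (Suc t) \<theta> (y - zg \<theta> m) * fd \<theta> F t m \<le> R * fd \<theta> F t m"
    if "m \<in> {-1..N}" for m
  proof (rule mult_right_mono[OF _ fd_nonneg])
    from that have "of_int m \<le> (y - s (Suc t)) / \<theta>"
      by (simp add: N_def le_floor_iff)
    with theta_pos have "s (Suc t) \<le> y - zg \<theta> m"
      by (simp add: zg_def le_divide_eq)
    moreover from that theta_pos have "- \<theta> \<le> zg \<theta> m"
      using mult_right_mono[of "-1" "of_int m" \<theta>] by (simp add: zg_def)
    ultimately have "s (Suc t) \<le> y - zg \<theta> m" "y - zg \<theta> m \<le> y + \<theta>"
      by simp_all
    with assms(2) show "phibar T \<alpha> \<theta> \<gamma> F s (Suc t) \<theta> (y - zg \<theta> m) \<le> R"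
      unfolding R_def
      by (meson Zg_diff zg_in_Zg phibar_le psibar_majorant_mono[OF tT(2)] order_trans)
  qed
  then have "(\<Sum>m \<in> {-1..N}. phibar T \<alpha> \<theta> \<gamma> F s (Suc t) \<theta> (y - zg \<theta> m) * fd \<theta> F t m)
      \<le> (\<Sum>m \<in> {-1..N}. R * fd \<theta> F t m)"
    by (rule sum_mono)
  also have "\<dots> = R * (F t (zg \<theta> (N + 1)) - F t (zg \<theta> (-1)))"
    unfolding sum_distrib_left[symmetric] fd_def
    using sum_int_telescope[of "-1" N "\<lambda>m. F t (zg \<theta> m)"] N_ge by simp
  also have "\<dots> \<le> R * F t (y + \<theta> - s (Suc t))"
    using monoD[OF F_mono[OF tT(1)] N_le] F_nonneg[OF tT(1), of "zg \<theta> (-1)"]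
      psibar_majorant_nonneg[OF tT(2)]
    by (intro mult_left_mono) (auto simp: R_def)
  finally show ?thesis
    by (simp add: N_def R_def mult.commute)
qed

lemma psibar_le_majorant_step:
  assumes "t + 2 \<le> T" "y \<in> Zg \<theta>"
    and phibar_le: "\<And>y. y \<in> Zg \<theta> \<Longrightarrow> s (Suc t) \<le> y \<Longrightarrow>
      phibar T \<alpha> \<theta> \<gamma> F s (Suc t) \<theta> y \<le> psibar_majorant T \<alpha> \<theta> \<gamma> F s (Suc t) y"
  shows "psibar T \<alpha> \<theta> \<gamma> F s t \<theta> y \<le> psibar_majorant T \<alpha> \<theta> \<gamma> F s t y"
proof (cases "y < s (Suc t) - \<theta>")
  case True
  have "0 \<le> \<alpha> * F t (y + \<theta> - s (Suc t)) * psibar_majorant T \<alpha> \<theta> \<gamma> F s (Suc t) (y + \<theta>)"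
    using assms(1) alpha_nonneg F_nonneg psibar_majorant_nonneg by simp
  with True assms(1) show ?thesis
    by (simp add: psibar_eq psibar_majorant_Suc)
next
  case False
  with sum_phibar_fd_le[OF assms(1,2) _ phibar_le] alpha_nonneg assms(1) show ?thesis
    by (simp add: psibar_eq psibar_majorant_Suc mult.assoc mult_left_mono)
qed

lemma phibar_le_majorant:
  assumes s_grid: "\<And>t. t + 2 \<le> T \<Longrightarrow> s t \<in> Zg \<theta>"
  shows "t < T \<Longrightarrow> y \<in> Zg \<theta> \<Longrightarrow> s t \<le> y \<Longrightarrow>
    phibar T \<alpha> \<theta> \<gamma> F s t \<theta> y \<le> psibar_majorant T \<alpha> \<theta> \<gamma> F s t y"
proof (induction "T - 1 - t" arbitrary: t y)
  case 0
  then have "t = T - 1"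
    by simp
  with 0 show ?case
    unfolding \<open>t = T - 1\<close> phibar_last psibar_majorant_last by simp
next
  case (Suc d)
  then have t: "t + 2 \<le> T"
    by simp
  have "phibar T \<alpha> \<theta> \<gamma> F s t \<theta> y = psibar T \<alpha> \<theta> \<gamma> F s t \<theta> y"
    by (rule phibar_eq_psibar_on_grid[where s = s and t = t, OF theta_pos t s_grid[OF t] Suc.prems(2,3)])
  also have "\<dots> \<le> psibar_majorant T \<alpha> \<theta> \<gamma> F s t y"
    using Suc.hyps(2) t by (intro psibar_le_majorant_step[OF t Suc.prems(2)] Suc.hyps(1)) auto
  finally show ?case .
qed

lemma psibar_le_majorant:
  assumes "\<And>t. t + 2 \<le> T \<Longrightarrow> s t \<in> Zg \<theta>" "t + 2 \<le> T" "y \<in> Zg \<theta>"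
  shows "psibar T \<alpha> \<theta> \<gamma> F s t \<theta> y \<le> psibar_majorant T \<alpha> \<theta> \<gamma> F s t y"
  using assms(2) by (intro psibar_le_majorant_step[OF assms(2,3)] phibar_le_majorant[OF assms(1)]) auto

end

theorem lemma4p9:
  fixes T :: nat and \<alpha> \<theta> :: real
    and c K \<gamma> :: "nat \<Rightarrow> real"
    and G :: "nat \<Rightarrow> real \<Rightarrow> real"
    and \<mu> :: "nat \<Rightarrow> real measure"
    and z :: real and t :: nat
  defines "C \<equiv> Cc \<alpha> c G \<mu>"
      and "F \<equiv> (\<lambda>t. cdf (\<mu> t))"
  assumes T2: "T \<ge> 2"
    and alpha: "0 < \<alpha>" "\<alpha> \<le> 1"
    and theta: "\<theta> > 0"
    and Kpos: "\<forall>t<T. K t \<ge> 0"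
    and demand_law: "\<forall>t<T. real_distribution (\<mu> t)"
    and demand_nonneg: "\<forall>t<T. AE x in \<mu> t. 0 \<le> x"
    and demand_mean: "\<forall>t<T. integrable (\<mu> t) (\<lambda>x. x)"
    and C_convex: "\<forall>t<T. convex_on UNIV (C t)"
    and C_coercive: "\<forall>t<T. filterlim (C t) at_top at_top \<and> filterlim (C t) at_top at_bot"
    and K_mono: "\<forall>t. t + 2 \<le> T \<longrightarrow> K t \<ge> \<alpha> * K (Suc t)"
    and C_lip: "\<forall>t<T. \<gamma> t \<ge> 0 \<and> (\<forall>x y. \<bar>C t x - C t y\<bar> \<le> \<gamma> t * \<bar>x - y\<bar>)"
    and finite_exp: "\<forall>t y. t + 2 \<le> T \<longrightarrow>
          summable (\<lambda>j. \<bar>Vf T \<alpha> \<theta> K C F (Suc t) (y - zg \<theta> (int j - 1)) * fd \<theta> F t (int j - 1)\<bar>)"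
    and z: "z \<in> Zg \<theta>"
    and t: "t \<le> T - 2"
  shows "psibar T \<alpha> \<theta> \<gamma> F (sf T \<alpha> \<theta> K C F) t \<theta> z
           \<le> \<gamma> t * \<theta> + \<theta> * (\<Sum>n = 1..T - 1 - t. \<alpha> ^ n * \<gamma> (t + n) *
                 (\<Prod>m = 0..n - 1. F (t + m) (z + real (m + 1) * \<theta> - sf T \<alpha> \<theta> K C F (t + m + 1))))"
proof -
  have F_mono: "mono (F t')" if "t' < T" for t'
  proof -
    interpret finite_borel_measure "\<mu> t'"
      using demand_law that by (simp add: real_distribution.finite_borel_measure_M)
    show ?thesis
      unfolding F_def by (rule monoI) (rule cdf_nondecreasing)
  qed
  have F_nonneg: "0 \<le> F t' x" for t' x
    by (simp add: F_def cdf_def)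
  have s_grid: "sf T \<alpha> \<theta> K C F t' \<in> Zg \<theta>" if "t' + 2 \<le> T" for t'
    using that Kpos C_coercive by (intro sf_in_Zg[OF theta]) auto
  have gamma_nonneg: "0 \<le> \<gamma> t'" if "t' < T" for t'
    using C_lip that by blast
  have "t + 2 \<le> T"
    using t T2 by simp
  from psibar_le_majorant[where s = "sf T \<alpha> \<theta> K C F",
      OF theta less_imp_le[OF alpha(1)] gamma_nonneg F_nonneg F_mono s_grid this z]
  show ?thesis
    unfolding psibar_majorant_def .
qed

end
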